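(* Let $Q\in GL(n,\mathbb{C})$ be a matrix such that $Q\bar Q\in\mathbb{R}I_n$. Then the condition $\operatorname{Tr}(QQ^* )=\operatorname{Tr}((QQ^* )^{-1})$ is equivalent to: $Q\bar Q=\pm I_n$ if $n$ is even, and $Q\bar Q=I_n$ if $n$ is odd.
   Context: $\bar Q$ denotes the entrywise complex conjugate of $Q$ and $Q^*$ its conjugate transpose. *)

theory Defs
  imports "HOL-Analysis.Analysis"
begin

definition mat_conj :: "complex^'n^'m \<Rightarrow> complex^'n^'m" where
  "mat_conj A = (\<chi> i j. cnj (A $ i $ j))"

definition mat_adj :: "complex^'n^'m \<Rightarrow> complex^'m^'n" where
  "mat_adj A = transpose (mat_conj A)"

end

theory Submission
  imports Defs
begin

text \<open>
  Write \<open>Q conj(Q) = r I\<close>. Taking determinants gives \<open>r^n = |det Q|^2 > 0\<close>, so \<open>r \<noteq> 0\<close>,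
  and \<open>r > 0\<close> for odd \<open>n\<close>. Transposing gives \<open>Q^* Q^T = r I\<close>, hence
  \<open>(Q Q^*)^-1 = r^-2 Q^T conj(Q)\<close>; since \<open>Tr (Q^T conj(Q)) = Tr (Q Q^*) > 0\<close>, the trace
  condition holds iff \<open>r^2 = 1\<close>.
\<close>

lemma mat_eq_iff: "(mat a :: 'a::zero^'n^'n) = mat b \<longleftrightarrow> a = b"
proof
  assume "(mat a :: 'a^'n^'n) = mat b"
  then have "(mat a :: 'a^'n^'n) $ i $ i = mat b $ i $ i" for i
    by simp
  then show "a = b"
    by (simp add: mat_def)
qed simp

lemma mat_matrix_mul_component: "((mat c :: 'a::comm_semiring_1^'n^'n) ** A) $ i $ j = c * A $ i $ j"
  unfolding matrix_matrix_mult_def mat_def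
  by (simp add: if_distrib if_distribR cong: if_cong)

lemma mat_mult_mat: "(mat a :: 'a::comm_semiring_1^'n^'n) ** mat b = mat (a * b)"
  by (simp add: vec_eq_iff mat_matrix_mul_component) (simp add: mat_def)

lemma matrix_mul_mat_commute: "(A :: 'a::comm_semiring_1^'n^'n) ** mat c = mat c ** A"
  unfolding matrix_matrix_mult_def mat_def
  by (simp add: vec_eq_iff if_distrib if_distribR mult.commute cong: if_cong)

lemma matrix_mul_mat_left_commute:
  "(A :: 'a::comm_semiring_1^'n^'n) ** (mat c ** B) = mat c ** (A ** B)"
  by (metis matrix_mul_assoc matrix_mul_mat_commute)

lemma trace_mat_mult: "trace ((mat c :: 'a::comm_semiring_1^'n^'n) ** A) = c * trace A"
  by (simp add: trace_def mat_matrix_mul_component sum_distrib_left)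

lemma trace_transpose: "trace (transpose A) = trace A"
  by (simp add: trace_def transpose_def)

lemma det_mat: "det (mat c :: 'a::comm_ring_1^'n^'n) = c ^ CARD('n)"
  by (simp add: det_diagonal mat_def)

lemma matrix_inv_unique:
  fixes A B :: "'a::field^'n^'n"
  assumes "A ** B = mat 1"
  shows "matrix_inv A = B"
proof -
  have "B ** A = mat 1"
    using assms matrix_left_right_inverse by blast
  with assms have inv: "A ** matrix_inv A = mat 1 \<and> matrix_inv A ** A = mat 1"
    unfolding matrix_inv_def by (rule someI[of _ B, OF conjI])
  have "matrix_inv A = matrix_inv A ** (A ** B)"
    using assms by simp
  also have "\<dots> = B"
    using inv by (simp add: matrix_mul_assoc)
  finally show ?thesis .
qed

lemma det_mat_conj: "det (mat_conj A) = cnj (det A)"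
  unfolding det_def mat_conj_def by (simp add: cnj_sum cnj_prod)

lemma transpose_mat_conj: "transpose (mat_conj A) = mat_adj A"
  by (simp add: mat_adj_def)

lemma trace_mult_adj:
  "trace (A ** mat_adj A) = of_real (\<Sum>i\<in>UNIV. \<Sum>j\<in>UNIV. (cmod (A $ i $ j))\<^sup>2)"
  unfolding trace_def matrix_matrix_mult_def mat_adj_def mat_conj_def transpose_def
  by (simp add: complex_norm_square del: of_real_power)

lemma trace_mult_adj_nonzero:
  assumes "A \<noteq> 0"
  shows "trace (A ** mat_adj A) \<noteq> 0"
proof -
  obtain i j where "A $ i $ j \<noteq> 0"
    using assms by (metis vec_eq_iff zero_index)
  then have "0 < (cmod (A $ i $ j))\<^sup>2"
    by simp
  also have "\<dots> \<le> (\<Sum>j\<in>UNIV. (cmod (A $ i $ j))\<^sup>2)"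
    by (rule member_le_sum) auto
  also have "\<dots> \<le> (\<Sum>i\<in>UNIV. \<Sum>j\<in>UNIV. (cmod (A $ i $ j))\<^sup>2)"
    by (rule member_le_sum) (auto intro: sum_nonneg)
  finally show ?thesis
    unfolding trace_mult_adj by (metis less_irrefl of_real_eq_0_iff)
qed

lemma trace_transpose_mult_conj: "trace (transpose A ** mat_conj A) = trace (A ** mat_adj A)"
proof -
  have "trace (transpose A ** mat_conj A) = trace (mat_adj A ** A)"
    by (metis trace_transpose matrix_transpose_mul transpose_transpose transpose_mat_conj)
  also have "\<dots> = trace (A ** mat_adj A)"
    by (rule trace_mul_sym)
  finally show ?thesis .
qed

lemma norm_det_square_of_mult_conj_eq_mat:
  fixes Q :: "complex^'n^'n"
  assumes "Q ** mat_conj Q = mat c"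
  shows "of_real ((cmod (det Q))\<^sup>2) = c ^ CARD('n)"
proof -
  have "det (Q ** mat_conj Q) = det (mat c :: complex^'n^'n)"
    using assms by simp
  then show ?thesis
    by (simp add: det_mul det_mat_conj det_mat complex_norm_square del: of_real_power)
qed

lemma matrix_inv_mult_adj:
  fixes Q :: "complex^'n^'n"
  assumes Q: "Q ** mat_conj Q = mat c" and "c \<noteq> 0"
  shows "matrix_inv (Q ** mat_adj Q) = mat (inverse (c\<^sup>2)) ** (transpose Q ** mat_conj Q)"
proof (rule matrix_inv_unique)
  have adj_transpose: "mat_adj Q ** transpose Q = mat c"
    using arg_cong[OF Q, of transpose]
    by (simp add: matrix_transpose_mul transpose_mat_conj)
  let ?s = "inverse (c\<^sup>2)"
  have "Q ** mat_adj Q ** (mat ?s ** (transpose Q ** mat_conj Q))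
      = mat ?s ** (Q ** mat_adj Q ** (transpose Q ** mat_conj Q))"
    by (rule matrix_mul_mat_left_commute)
  also have "\<dots> = mat ?s ** (Q ** ((mat_adj Q ** transpose Q) ** mat_conj Q))"
    by (simp only: matrix_mul_assoc)
  also have "\<dots> = mat ?s ** (mat c ** mat c)"
    by (simp only: adj_transpose matrix_mul_mat_left_commute[of Q] Q)
  also have "\<dots> = mat 1"
    using \<open>c \<noteq> 0\<close> by (simp add: mat_mult_mat power2_eq_square field_simps)
  finally show "Q ** mat_adj Q ** (mat ?s ** (transpose Q ** mat_conj Q)) = mat 1" .
qed

lemma trace_matrix_inv_mult_adj:
  fixes Q :: "complex^'n^'n"
  assumes "Q ** mat_conj Q = mat c" and "c \<noteq> 0"
  shows "trace (matrix_inv (Q ** mat_adj Q)) = trace (Q ** mat_adj Q) / c\<^sup>2"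
  using matrix_inv_mult_adj[OF assms]
  by (simp add: trace_mat_mult trace_transpose_mult_conj field_simps)

theorem proposition1:
  fixes Q :: "complex^'n^'n"
  assumes "invertible Q"
    and "\<exists>r::real. Q ** mat_conj Q = mat (complex_of_real r)"
  shows "trace (Q ** mat_adj Q) = trace (matrix_inv (Q ** mat_adj Q)) \<longleftrightarrow>
    (if even CARD('n) then Q ** mat_conj Q = mat 1 \<or> Q ** mat_conj Q = mat (-1)
     else Q ** mat_conj Q = mat 1)"
proof -
  obtain r :: real where r: "Q ** mat_conj Q = mat (complex_of_real r)"
    using assms(2) by blast
  have "det Q \<noteq> 0"
    using assms(1) invertible_det_nz by blast
  moreover have "r ^ CARD('n) = (cmod (det Q))\<^sup>2"
    using norm_det_square_of_mult_conj_eq_mat[OF r] by (metis of_real_eq_iff of_real_power)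
  ultimately have r_power_pos: "r ^ CARD('n) > 0"
    by simp
  then have "r \<noteq> 0"
    by (metis less_irrefl power_0_left zero_less_card_finite)
  have "Q \<noteq> 0"
    using \<open>det Q \<noteq> 0\<close> by (metis det_0 mat_0)
  then have "trace (Q ** mat_adj Q) = trace (matrix_inv (Q ** mat_adj Q)) \<longleftrightarrow> r\<^sup>2 = 1"
    using trace_matrix_inv_mult_adj[OF r] \<open>r \<noteq> 0\<close> trace_mult_adj_nonzero[of Q]
    by (auto simp: eq_divide_eq simp flip: of_real_power)
  moreover have "Q ** mat_conj Q = mat 1 \<longleftrightarrow> r = 1" "Q ** mat_conj Q = mat (-1) \<longleftrightarrow> r = -1"
    unfolding r mat_eq_iff by (metis of_real_eq_1_iff of_real_1 of_real_eq_minus_of_real_iff)+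
  moreover have "odd CARD('n) \<Longrightarrow> 0 < r"
    using r_power_pos by (simp add: zero_less_power_eq)
  ultimately show ?thesis
    unfolding power2_eq_1_iff by auto
qed

end
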